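(* In the setting of the context, the following two conditions are equivalent: (MC1) for every continuous path $c:[0,\epsilon)\to G$ with $c(0)=e$, the path $t\mapsto \Xi(J_0\cdot c(t))$ in $K$ is constant equal to $J_0$; (MC2) up to shrinking $W$, for $g\in W$, $J_0\cdot g\in K$ implies $J_0\cdot g=J_0$.
   Context: $X$ is a compact connected smooth manifold, $\mathcal E$ a Banach manifold, $\mathcal I\subset\mathcal E$ a closed subset, $G$ a topological group with countable topology acting continuously on the right on $\mathcal E$ by smooth transformations preserving $\mathcal I$, $J_0\in\mathcal I$, $e$ the identity of $G$. There are a Banach space $T$, a homeomorphism $\phi:V\to W$ from a connected open neighbourhood $V$ of $0\in T$ onto a connected open neighbourhood $W$ of $e$, and a connected open neighbourhood $U$ of $J_0$ such that $(\xi,J)\mapsto J\cdot\phi(\xi)$ is smooth on $V\times U$, with differential $L$ at $(0,J_0)$; $\mathfrak e=\{\xi: L(\xi,0)=0\}$. Assume $\mathfrak e$ has a closed complement $\mathfrak e^\perp$ in $T$, $L(\xi,\omega)=\omega+P\xi$ with $P:T\to T_{J_0}\mathcal E$ bounded linear, and $\operatorname{Im}P$ is closed with closed complement $F^\perp$. Let $\tilde K\subset U$ be a submanifold through $J_0$ tangent to $F^\perp$, $K=\tilde K\cap\mathcal I$, and (after shrinking) let $\Phi(\xi,J)=J\cdot\phi(\xi)$ be an isomorphism from $(\mathfrak e^\perp\cap V)\times K$ onto $U\cap\mathcal I$. The retraction $\Xi:U\cap\mathcal I\to K$ is the second component of $\Phi^{-1}$. *)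

theory Defs
  imports "HOL-Analysis.Analysis"
begin

definition PhiMap :: "('e \<Rightarrow> 'g \<Rightarrow> 'e) \<Rightarrow> ('t \<Rightarrow> 'g) \<Rightarrow> 't \<times> 'e \<Rightarrow> 'e" where
  "PhiMap act \<phi> = (\<lambda>(\<xi>, J). act J (\<phi> \<xi>))"

definition Xi :: "('e \<Rightarrow> 'g \<Rightarrow> 'e) \<Rightarrow> ('t \<Rightarrow> 'g) \<Rightarrow> 't set \<Rightarrow> 't set \<Rightarrow> 'e set \<Rightarrow> 'e \<Rightarrow> 'e" where
  "Xi act \<phi> Eperp V K J = snd (inv_into ((Eperp \<inter> V) \<times> K) (PhiMap act \<phi>) J)"

end

theory Submission
  imports Defs
begin

text \<open>
  Write \<Psi> for the inverse of \<Phi>(\<xi>, J) = J \<cdot> \<phi>(\<xi>), so that \<Xi> = snd \<circ> \<Psi> and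
  \<Xi>(J0 \<cdot> g) = J0 \<cdot> (g - \<phi>(\<xi>)) for the appropriate \<xi>.
  (MC1) \<Longrightarrow> (MC2): each g = \<phi>(\<xi>) in a small star-shaped chart neighbourhood is reached by the
  path t \<mapsto> \<phi>(t \<xi>); if J0 \<cdot> g \<in> K then \<Xi> fixes it, and (MC1) gives J0 \<cdot> g = J0.
  (MC2) \<Longrightarrow> (MC1): along a path c, the points \<Xi>(J0 \<cdot> c(t)) = J0 \<cdot> h(t) lie in K for a continuous
  h : [0,\<epsilon>) \<rightarrow> G. The set where J0 \<cdot> h(t) = J0 is closed, and it is open because near such a t
  the increment -h(t0) + h(t) lies in W', where (MC2) applies. It contains 0, hence is everything.
\<close>

lemma continuous_on_act:
  assumes "continuous_on UNIV (\<lambda>p. act (fst p) (snd p))"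
    and "continuous_on S a" and "continuous_on S b"
  shows "continuous_on S (\<lambda>s. act (a s) (b s))"
proof -
  have "continuous_on S ((\<lambda>p. act (fst p) (snd p)) \<circ> (\<lambda>s. (a s, b s)))"
    by (rule continuous_on_compose[OF continuous_on_Pair[OF assms(2,3)]])
       (rule continuous_on_subset[OF assms(1)], simp)
  then show ?thesis by (simp add: o_def)
qed

lemma orbit_path_in_slice_stationary:
  fixes h :: "'s::topological_space \<Rightarrow> 'g::topological_group_add"
    and act :: "'e::t2_space \<Rightarrow> 'g \<Rightarrow> 'e"
  assumes act_cont: "continuous_on UNIV (\<lambda>p. act (fst p) (snd p))"
    and act_comp: "\<And>J g h. act (act J g) h = act J (g + h)"
    and W'_open: "open W'" and W'_0: "0 \<in> W'"
    and stab: "\<And>g. g \<in> W' \<Longrightarrow> act J0 g \<in> K \<Longrightarrow> act J0 g = J0"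
    and S_conn: "connected S" and h_cont: "continuous_on S h"
    and h_K: "\<And>s. s \<in> S \<Longrightarrow> act J0 (h s) \<in> K"
    and s0: "s0 \<in> S" "act J0 (h s0) = J0"
  shows "\<forall>s\<in>S. act J0 (h s) = J0"
proof -
  define T where "T = {s \<in> S. act J0 (h s) = J0}"
  have "closedin (top_of_set S) T"
    unfolding T_def
    by (rule continuous_closedin_preimage_constant
        [OF continuous_on_act[OF act_cont continuous_on_const h_cont]])
  moreover have "openin (top_of_set S) T"
  proof (rule openin_subopen[THEN iffD2], intro ballI)
    fix t0 assume "t0 \<in> T"
    then have t0: "t0 \<in> S" "act J0 (h t0) = J0" unfolding T_def by auto
    define N where "N = {s \<in> S. - h t0 + h s \<in> W'}"
    have "openin (top_of_set S) N"
      using continuous_openin_preimage_gen[OF _ W'_open, of S "\<lambda>s. - h t0 + h s"] h_cont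
      unfolding N_def by (simp add: continuous_intros Int_def vimage_def)
    moreover have "t0 \<in> N" using t0 W'_0 unfolding N_def by simp
    moreover have "N \<subseteq> T"
    proof
      fix s assume "s \<in> N"
      then have s: "s \<in> S" "- h t0 + h s \<in> W'" unfolding N_def by auto
      have "act J0 (- h t0 + h s) = act (act J0 (h t0)) (- h t0 + h s)" using t0 by simp
      also have "\<dots> = act J0 (h s)" by (simp add: act_comp add.assoc[symmetric])
      finally show "s \<in> T" using stab[OF s(2)] h_K[OF s(1)] s(1) unfolding T_def by simp
    qed
    ultimately show "\<exists>N. openin (top_of_set S) N \<and> t0 \<in> N \<and> N \<subseteq> T" by blast
  qed
  moreover have "s0 \<in> T" using s0 unfolding T_def by simp
  ultimately have "T = S" using S_conn connected_clopen T_def by blast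
  then show ?thesis unfolding T_def by auto
qed

lemma Xi_eq_snd_inverse:
  assumes "homeomorphism ((Eperp \<inter> V) \<times> K) Y (PhiMap act \<phi>) \<Psi>" and "y \<in> Y"
  shows "Xi act \<phi> Eperp V K y = snd (\<Psi> y)"
proof -
  have "inj_on (PhiMap act \<phi>) ((Eperp \<inter> V) \<times> K)"
    using assms(1) by (metis homeomorphism_apply1 inj_on_inverseI)
  moreover have "\<Psi> y \<in> (Eperp \<inter> V) \<times> K" "PhiMap act \<phi> (\<Psi> y) = y"
    using assms by (auto simp: homeomorphism_def)
  ultimately show ?thesis
    unfolding Xi_def by (metis inv_into_f_f)
qed

lemma Xi_fixes_slice:
  assumes "homeomorphism ((Eperp \<inter> V) \<times> K) Y (PhiMap act \<phi>) \<Psi>"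
    and "0 \<in> Eperp" "0 \<in> V" "\<phi> 0 = 0" "\<And>J. act J 0 = J" and "J \<in> K"
  shows "Xi act \<phi> Eperp V K J = J"
proof -
  have "(0, J) \<in> (Eperp \<inter> V) \<times> K" using assms by simp
  moreover have "PhiMap act \<phi> (0, J) = J" using assms by (simp add: PhiMap_def)
  ultimately have "J \<in> Y" "\<Psi> J = (0, J)"
    using assms(1) by (metis homeomorphism_image1 image_eqI, metis homeomorphism_apply1)
  then show ?thesis using Xi_eq_snd_inverse[OF assms(1)] by simp
qed

lemma Xi_eq_act_minus_chart:
  fixes act :: "'e::topological_space \<Rightarrow> 'g::{group_add, topological_space} \<Rightarrow> 'e"
  assumes "homeomorphism ((Eperp \<inter> V) \<times> K) Y (PhiMap act \<phi>) \<Psi>" and "y \<in> Y"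
    and act_id: "\<And>J. act J 0 = J" and act_comp: "\<And>J g h. act (act J g) h = act J (g + h)"
  shows "Xi act \<phi> Eperp V K y = act y (- \<phi> (fst (\<Psi> y)))"
proof -
  have "y = act (snd (\<Psi> y)) (\<phi> (fst (\<Psi> y)))"
    using assms(1,2) unfolding homeomorphism_def PhiMap_def by (metis case_prod_beta)
  then have "act y (- \<phi> (fst (\<Psi> y))) = snd (\<Psi> y)"
    by (metis act_comp act_id add.right_inverse)
  then show ?thesis using Xi_eq_snd_inverse[OF assms(1,2)] by simp
qed

lemma retraction_trivial_on_paths_imp_slice_stabilizer:
  fixes act :: "'e::topological_space \<Rightarrow> 'g::{zero, topological_space} \<Rightarrow> 'e"
    and \<phi> :: "'t::real_normed_vector \<Rightarrow> 'g" and \<Xi> :: "'e \<Rightarrow> 'e"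
  assumes act_cont: "continuous_on UNIV (\<lambda>p. act (fst p) (snd p))"
    and act_id: "\<And>J. act J 0 = J"
    and chart: "homeomorphism V W \<phi> \<psi>" and "open V" "open W" "0 \<in> V" "\<phi> 0 = 0"
    and "open U" "J0 \<in> U"
    and \<Xi>_K: "\<forall>J\<in>K. \<Xi> J = J"
    and MC1: "\<forall>\<epsilon>>0. \<forall>c :: real \<Rightarrow> 'g. continuous_on {0..<\<epsilon>} c \<longrightarrow> c 0 = 0 \<longrightarrow>
      (\<forall>t\<in>{0..<\<epsilon>}. act J0 (c t) \<in> U) \<longrightarrow> (\<forall>t\<in>{0..<\<epsilon>}. \<Xi> (act J0 (c t)) = J0)"
  shows "\<exists>W'. open W' \<and> connected W' \<and> 0 \<in> W' \<and> W' \<subseteq> W \<and>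
           (\<forall>g\<in>W'. act J0 g \<in> K \<longrightarrow> act J0 g = J0)"
proof -
  have \<phi>_cont: "continuous_on V \<phi>" using chart by (simp add: homeomorphism_def)
  have "open (V \<inter> (\<lambda>\<xi>. act J0 (\<phi> \<xi>)) -` U)"
    using continuous_open_preimage[OF continuous_on_act[OF act_cont continuous_on_const \<phi>_cont]]
      assms by (simp add: Int_commute vimage_def)
  moreover have "0 \<in> V \<inter> (\<lambda>\<xi>. act J0 (\<phi> \<xi>)) -` U" using assms by simp
  ultimately obtain r where "r > 0" and ball_r: "ball 0 r \<subseteq> V \<inter> (\<lambda>\<xi>. act J0 (\<phi> \<xi>)) -` U"
    by (meson open_contains_ball)
  define W' where "W' = \<phi> ` ball 0 r"
  have "openin (top_of_set W) W'"
    unfolding W'_def using ball_r by (intro homeomorphism_imp_open_map[OF chart]) (auto intro: open_subset)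
  then have "open W'" using \<open>open W\<close> openin_open_trans by blast
  moreover have "connected W'"
    unfolding W'_def using ball_r by (intro connected_continuous_image continuous_on_subset[OF \<phi>_cont]) auto
  moreover have "W' \<subseteq> W" using ball_r chart unfolding W'_def homeomorphism_def by auto
  moreover have "0 \<in> W'" unfolding W'_def using \<open>r > 0\<close> \<open>\<phi> 0 = 0\<close> by (metis centre_in_ball imageI)
  moreover have "act J0 g = J0" if "g \<in> W'" and "act J0 g \<in> K" for g
  proof -
    obtain \<xi> where \<xi>: "\<xi> \<in> ball 0 r" "g = \<phi> \<xi>" using \<open>g \<in> W'\<close> unfolding W'_def by auto
    define c where "c = (\<lambda>t::real. \<phi> (min t 1 *\<^sub>R \<xi>))"
    have radial_in_ball: "min t 1 *\<^sub>R \<xi> \<in> ball 0 r" if "t \<in> {0..<2}" for t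
    proof -
      have "norm (min t 1 *\<^sub>R \<xi>) \<le> norm \<xi>" using that by (auto intro: mult_left_le_one_le)
      then show ?thesis using \<xi> by simp
    qed
    have "continuous_on {0..<2} c"
      unfolding c_def using radial_in_ball ball_r
      by (intro continuous_on_compose2[OF \<phi>_cont] continuous_intros) auto
    moreover have "\<forall>t\<in>{0..<2}. act J0 (c t) \<in> U"
      using radial_in_ball ball_r unfolding c_def by blast
    ultimately have "\<Xi> (act J0 (c 1)) = J0"
      using MC1[rule_format, of 2 c 1] \<open>\<phi> 0 = 0\<close> by (simp add: c_def)
    then show ?thesis using \<Xi>_K that(2) \<xi> by (simp add: c_def)
  qed
  ultimately show ?thesis by blast
qed

lemma slice_stabilizer_imp_retraction_trivial_on_paths:
  fixes act :: "'e::t2_space \<Rightarrow> 'g::topological_group_add \<Rightarrow> 'e"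
    and \<phi> :: "'t::{zero, topological_space} \<Rightarrow> 'g" and c :: "real \<Rightarrow> 'g"
  assumes act_cont: "continuous_on UNIV (\<lambda>p. act (fst p) (snd p))"
    and act_id: "\<And>J. act J 0 = J"
    and act_comp: "\<And>J g h. act (act J g) h = act J (g + h)"
    and act_I: "\<And>J g. J \<in> I \<Longrightarrow> act J g \<in> I" and "J0 \<in> I"
    and \<phi>_cont: "continuous_on V \<phi>" and "0 \<in> Eperp" "0 \<in> V" "\<phi> 0 = 0" "J0 \<in> K"
    and slice: "homeomorphism ((Eperp \<inter> V) \<times> K) (U \<inter> I) (PhiMap act \<phi>) \<Psi>"
    and "open W'" "0 \<in> W'" and stab: "\<And>g. g \<in> W' \<Longrightarrow> act J0 g \<in> K \<Longrightarrow> act J0 g = J0"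
    and "\<epsilon> > 0" and c_cont: "continuous_on {0..<\<epsilon>} c" and "c 0 = 0"
    and c_U: "\<forall>t\<in>{0..<\<epsilon>}. act J0 (c t) \<in> U"
  shows "\<forall>t\<in>{0..<\<epsilon>}. Xi act \<phi> Eperp V K (act J0 (c t)) = J0"
proof -
  define S where "S = {0..<\<epsilon>}"
  define \<xi> where "\<xi> = (\<lambda>s. fst (\<Psi> (act J0 (c s))))"
  define h where "h = (\<lambda>s. c s + - \<phi> (\<xi> s))"
  have orbit_UI: "act J0 (c s) \<in> U \<inter> I" if "s \<in> S" for s
    using c_U that act_I[OF \<open>J0 \<in> I\<close>] unfolding S_def by auto
  have Xi_orbit: "Xi act \<phi> Eperp V K (act J0 (c s)) = act J0 (h s)" if "s \<in> S" for s
    using Xi_eq_act_minus_chart[OF slice orbit_UI[OF that] act_id act_comp]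
    unfolding h_def \<xi>_def by (simp add: act_comp)
  have \<Psi>_cont: "continuous_on (U \<inter> I) \<Psi>" and \<Psi>_into: "\<Psi> ` (U \<inter> I) \<subseteq> (Eperp \<inter> V) \<times> K"
    using slice by (auto simp: homeomorphism_def)
  have "continuous_on S \<xi>"
    unfolding \<xi>_def using orbit_UI c_cont unfolding S_def
    by (intro continuous_intros continuous_on_compose2[OF \<Psi>_cont]
        continuous_on_act[OF act_cont continuous_on_const]) auto
  moreover have "\<xi> s \<in> V" if "s \<in> S" for s
    using \<Psi>_into orbit_UI[OF that] unfolding \<xi>_def by (auto simp: mem_Times_iff)
  ultimately have "continuous_on S h"
    unfolding h_def using c_cont unfolding S_def
    by (intro continuous_intros continuous_on_compose2[OF \<phi>_cont]) auto
  moreover have "act J0 (h s) \<in> K" if "s \<in> S" for s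
    using \<Psi>_into orbit_UI[OF that] Xi_orbit[OF that] Xi_eq_snd_inverse[OF slice orbit_UI[OF that]]
    by (auto simp: mem_Times_iff)
  moreover have "0 \<in> S" "act J0 (h 0) = J0"
    using \<open>\<epsilon> > 0\<close> Xi_orbit[of 0] Xi_fixes_slice[OF slice _ _ _ act_id \<open>J0 \<in> K\<close>] assms
    unfolding S_def by auto
  moreover have "connected S" unfolding S_def by (simp add: is_interval_connected)
  ultimately have "\<forall>s\<in>S. act J0 (h s) = J0"
    by (intro orbit_path_in_slice_stationary[OF act_cont act_comp \<open>open W'\<close> \<open>0 \<in> W'\<close> stab])
  then show ?thesis using Xi_orbit unfolding S_def by simp
qed

theorem mainTheorem2:
  fixes act :: "'e::t2_space \<Rightarrow> 'g::{topological_group_add, second_countable_topology} \<Rightarrow> 'e"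
    and \<phi> :: "'t::banach \<Rightarrow> 'g"
    and V Eperp :: "'t set" and W :: "'g set" and U I K :: "'e set" and J0 :: 'e
  assumes I_closed: "closed I"
    and act_cont: "continuous_on UNIV (\<lambda>p. act (fst p) (snd p))"
    and act_id: "\<And>J. act J 0 = J"
    and act_comp: "\<And>J g h. act (act J g) h = act J (g + h)"
    and act_I: "\<And>J g. J \<in> I \<Longrightarrow> act J g \<in> I"
    and J0_I: "J0 \<in> I"
    and V_open: "open V" and V_conn: "connected V" and V_0: "0 \<in> V"
    and W_open: "open W" and W_conn: "connected W" and W_0: "0 \<in> W"
    and phi_homeo: "\<exists>\<psi>. homeomorphism V W \<phi> \<psi>" and phi_0: "\<phi> 0 = 0"
    and U_open: "open U" and U_conn: "connected U" and J0_U: "J0 \<in> U"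
    and Eperp_sub: "subspace Eperp" and Eperp_closed: "closed Eperp"
    and J0_K: "J0 \<in> K" and K_sub: "K \<subseteq> U \<inter> I"
    and Phi_iso: "\<exists>\<Psi>. homeomorphism ((Eperp \<inter> V) \<times> K) (U \<inter> I) (PhiMap act \<phi>) \<Psi>"
  shows "(\<forall>\<epsilon>>0. \<forall>c :: real \<Rightarrow> 'g.
            continuous_on {0..<\<epsilon>} c \<longrightarrow> c 0 = 0 \<longrightarrow>
            (\<forall>t\<in>{0..<\<epsilon>}. act J0 (c t) \<in> U) \<longrightarrow>
            (\<forall>t\<in>{0..<\<epsilon>}. Xi act \<phi> Eperp V K (act J0 (c t)) = J0))
     \<longleftrightarrow>
         (\<exists>W'. open W' \<and> connected W' \<and> 0 \<in> W' \<and> W' \<subseteq> W \<and>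
            (\<forall>g\<in>W'. act J0 g \<in> K \<longrightarrow> act J0 g = J0))"
proof -
  obtain \<psi> where chart: "homeomorphism V W \<phi> \<psi>" using phi_homeo by blast
  obtain \<Psi> where slice: "homeomorphism ((Eperp \<inter> V) \<times> K) (U \<inter> I) (PhiMap act \<phi>) \<Psi>"
    using Phi_iso by blast
  have "0 \<in> Eperp" using Eperp_sub by (rule subspace_0)
  have Xi_K: "\<forall>J\<in>K. Xi act \<phi> Eperp V K J = J"
    using Xi_fixes_slice[OF slice \<open>0 \<in> Eperp\<close> V_0 phi_0 act_id] by blast
  have \<phi>_cont: "continuous_on V \<phi>" using chart by (simp add: homeomorphism_def)
  note MC1_imp_MC2 = retraction_trivial_on_paths_imp_slice_stabilizer[OF act_cont act_id chart
      V_open W_open V_0 phi_0 U_open J0_U Xi_K]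
  note MC2_imp_MC1 = slice_stabilizer_imp_retraction_trivial_on_paths[OF act_cont act_id act_comp
      act_I J0_I \<phi>_cont \<open>0 \<in> Eperp\<close> V_0 phi_0 J0_K slice]
  show ?thesis
    apply (rule iffI)
     apply (erule MC1_imp_MC2)
    apply (elim exE conjE, intro allI impI)
    by (rule MC2_imp_MC1) auto
qed

end
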